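(* Let $\mathcal A'$ be a tree weakening of a finite tree multi-algebra $\mathcal A$. Then (1) every basic relation closed under projection for $\mathcal A'$ is closed under projection for $\mathcal A$; and (2) every scenario that is algebraically closed for $\mathcal A'$ is algebraically closed for $\mathcal A$.
   Context: A finite non-associative algebra is a tuple $(\mathcal A,\cup,\neg,\emptyset,\mathcal B,\diamond,\overline{\cdot},e)$ where $(\mathcal A,\cup,\neg,\emptyset,\mathcal B)$ is a finite Boolean algebra and for all $x,y,z$: $\overline{\overline x}=x$, $\overline{x\cup y}=\overline x\cup\overline y$, $\overline{x\diamond y}=\overline y\diamond\overline x$, $e\diamond x=x\diamond e=x$, $x\diamond(y\cup z)=(x\diamond y)\cup(x\diamond z)$, $(x\diamond y)\cap\overline z=\emptyset\iff(y\diamond z)\cap\overline x=\emptyset$. $r\subseteq r'$ means $r\cup r'=r'$; atoms are basic relations; $\mathsf B_i$ denotes the atoms of $\mathcal A_i$. A projection operator from $\mathcal A$ to $\mathcal A'$ is a map $\Rsh$ with $\Rsh(r\cup r')=\Rsh r\cup\Rsh r'$ and $\Rsh\overline r=\overline{\Rsh r}$. A finite multi-algebra is a product $\mathcal A_1\times\cdots\times\mathcal A_m$ of finite non-associative algebras with projection operators $\Rsh_i^j:\mathcal A_i\to\mathcal A_j$ for distinct $i,j$; operations componentwise on $R=(R_1,\dots,R_m)$; $R$ basic if all $R_i$ are atoms; $R$ closed under projection if $R_j\subseteq\Rsh_i^jR_i$ for all distinct $i,j$. A network is a finite set $E$ of variables with a relation $N^{xy}$ for distinct $x,y$, $N^{yx}=\overline{N^{xy}}$;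 a scenario if all $N^{xy}$ basic; closed under composition if $N^{xz}\subseteq N^{xy}\diamond N^{yz}$ for all distinct $x,y,z$; algebraically closed if closed under composition and every $N^{xy}$ is closed under projection. The inverse projection $\check\Rsh_i^j:\mathcal A_j\to\mathcal A_i$ of $\Rsh_i^j$ is defined by: for $b\in\mathsf B_i$, $b'\in\mathsf B_j$, $b\subseteq\check\Rsh_i^jb'\iff b'\subseteq\Rsh_i^jb$. An anti-tree structure on $V$ is a directed graph $(V,E)$ with a root $r$ such that every $v\ne r$ has exactly one directed path to $r$; write $v\to v'$ for an edge. A plenary anti-tree structure of $\mathcal A$ is an anti-tree structure $\mathtt A$ on $\{1,\dots,m\}$ such that for all distinct $i,j$, with $i=k_0\to\cdots\to k_s\leftarrow\cdots\leftarrow k_{s+t+1}=j$ the shortest oriented chain between $i$ and $j$ in $\mathtt A$, every $b\in\mathsf B_i$ satisfies $\Rsh_i^jb\supseteq\check\Rsh_j^{k_{s+t}}\cdots\check\Rsh_{k_{s+1}}^{k_s}\Rsh_{k_{s-1}}^{k_s}\cdots\Rsh_i^{k_1}b$. $\mathcal A$ is a tree multi-algebra if it has one. $\mathcal A'$ is a weakening of $\mathcal A$ if it has the same algebras and operations and $\Rsh_i^jb\subseteq\Rsh_i'^jb$ for all distinct $i,j$ and atoms $b$ of $\mathcal A_i$ ($\Rsh'$ the projections of $\mathcal A'$). It is a tree weakening if moreover there is a plenary anti-tree structure $\mathtt A$ of $\mathcal A$ such that $\Rsh_i^jb=\Rsh_i'^jb$ for all atoms $b$ of $\mathcal A_i$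 whenever $i\to j$ is an edge of $\mathtt A$. *)

theory Defs
  imports Main
begin

text \<open>A finite Boolean algebra is represented as the powerset of its (finite) set of atoms B;
  relations are subsets of B, union is set union, complement is B - r, the empty relation
  is {} and the universal relation is B.  Atoms (basic relations) are the singletons {b}, b in B.\<close>

definition na_algebra ::
  "'a set \<Rightarrow> ('a set \<Rightarrow> 'a set \<Rightarrow> 'a set) \<Rightarrow> ('a set \<Rightarrow> 'a set) \<Rightarrow> 'a set \<Rightarrow> bool" where
  "na_algebra B cmp conv e \<longleftrightarrow>
     finite B \<and> e \<subseteq> B \<and>
     (\<forall>x y. x \<subseteq> B \<longrightarrow> y \<subseteq> B \<longrightarrow> cmp x y \<subseteq> B) \<and>
     (\<forall>x. x \<subseteq> B \<longrightarrow> conv x \<subseteq> B) \<and>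
     (\<forall>x. x \<subseteq> B \<longrightarrow> conv (conv x) = x) \<and>
     (\<forall>x y. x \<subseteq> B \<longrightarrow> y \<subseteq> B \<longrightarrow> conv (x \<union> y) = conv x \<union> conv y) \<and>
     (\<forall>x y. x \<subseteq> B \<longrightarrow> y \<subseteq> B \<longrightarrow> conv (cmp x y) = cmp (conv y) (conv x)) \<and>
     (\<forall>x. x \<subseteq> B \<longrightarrow> cmp e x = x \<and> cmp x e = x) \<and>
     (\<forall>x y z. x \<subseteq> B \<longrightarrow> y \<subseteq> B \<longrightarrow> z \<subseteq> B \<longrightarrow> cmp x (y \<union> z) = cmp x y \<union> cmp x z) \<and>
     (\<forall>x y z. x \<subseteq> B \<longrightarrow> y \<subseteq> B \<longrightarrow> z \<subseteq> B \<longrightarrow>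
        (cmp x y \<inter> conv z = {} \<longleftrightarrow> cmp y z \<inter> conv x = {}))"

definition projection_op ::
  "'a set \<Rightarrow> ('a set \<Rightarrow> 'a set) \<Rightarrow> 'a set \<Rightarrow> ('a set \<Rightarrow> 'a set) \<Rightarrow> ('a set \<Rightarrow> 'a set) \<Rightarrow> bool" where
  "projection_op B conv B' conv' P \<longleftrightarrow>
     (\<forall>r. r \<subseteq> B \<longrightarrow> P r \<subseteq> B') \<and>
     (\<forall>r r'. r \<subseteq> B \<longrightarrow> r' \<subseteq> B \<longrightarrow> P (r \<union> r') = P r \<union> P r') \<and>
     (\<forall>r. r \<subseteq> B \<longrightarrow> P (conv r) = conv' (P r))"

definition multi_algebra ::
  "nat \<Rightarrow> (nat \<Rightarrow> 'a set) \<Rightarrow> (nat \<Rightarrow> 'a set \<Rightarrow> 'a set \<Rightarrow> 'a set) \<Rightarrow> (nat \<Rightarrow> 'a set \<Rightarrow> 'a set)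
     \<Rightarrow> (nat \<Rightarrow> 'a set) \<Rightarrow> (nat \<Rightarrow> nat \<Rightarrow> 'a set \<Rightarrow> 'a set) \<Rightarrow> bool" where
  "multi_algebra m B cmp conv e Pr \<longleftrightarrow>
     (\<forall>i\<in>{1..m}. na_algebra (B i) (cmp i) (conv i) (e i)) \<and>
     (\<forall>i\<in>{1..m}. \<forall>j\<in>{1..m}. i \<noteq> j \<longrightarrow> projection_op (B i) (conv i) (B j) (conv j) (Pr i j))"

text \<open>Relations of the multi-algebra are tuples R :: nat => 'a set (components 1..m).\<close>
definition basic_rel :: "nat \<Rightarrow> (nat \<Rightarrow> 'a set) \<Rightarrow> (nat \<Rightarrow> 'a set) \<Rightarrow> bool" where
  "basic_rel m B R \<longleftrightarrow> (\<forall>i\<in>{1..m}. \<exists>b\<in>B i. R i = {b})"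

definition closed_proj :: "nat \<Rightarrow> (nat \<Rightarrow> nat \<Rightarrow> 'a set \<Rightarrow> 'a set) \<Rightarrow> (nat \<Rightarrow> 'a set) \<Rightarrow> bool" where
  "closed_proj m Pr R \<longleftrightarrow> (\<forall>i\<in>{1..m}. \<forall>j\<in>{1..m}. i \<noteq> j \<longrightarrow> R j \<subseteq> Pr i j (R i))"

definition network ::
  "nat \<Rightarrow> (nat \<Rightarrow> 'a set) \<Rightarrow> (nat \<Rightarrow> 'a set \<Rightarrow> 'a set) \<Rightarrow> 'v set \<Rightarrow> ('v \<Rightarrow> 'v \<Rightarrow> nat \<Rightarrow> 'a set) \<Rightarrow> bool" where
  "network m B conv V N \<longleftrightarrow> finite V \<and>
     (\<forall>x\<in>V. \<forall>y\<in>V. x \<noteq> y \<longrightarrow> (\<forall>i\<in>{1..m}. N x y i \<subseteq> B i \<and> N y x i = conv i (N x y i)))"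

definition scenario ::
  "nat \<Rightarrow> (nat \<Rightarrow> 'a set) \<Rightarrow> (nat \<Rightarrow> 'a set \<Rightarrow> 'a set) \<Rightarrow> 'v set \<Rightarrow> ('v \<Rightarrow> 'v \<Rightarrow> nat \<Rightarrow> 'a set) \<Rightarrow> bool" where
  "scenario m B conv V N \<longleftrightarrow> network m B conv V N \<and>
     (\<forall>x\<in>V. \<forall>y\<in>V. x \<noteq> y \<longrightarrow> basic_rel m B (N x y))"

definition comp_closed ::
  "nat \<Rightarrow> (nat \<Rightarrow> 'a set \<Rightarrow> 'a set \<Rightarrow> 'a set) \<Rightarrow> 'v set \<Rightarrow> ('v \<Rightarrow> 'v \<Rightarrow> nat \<Rightarrow> 'a set) \<Rightarrow> bool" where
  "comp_closed m cmp V N \<longleftrightarrow>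
     (\<forall>x\<in>V. \<forall>y\<in>V. \<forall>z\<in>V. x \<noteq> y \<and> y \<noteq> z \<and> x \<noteq> z \<longrightarrow>
        (\<forall>i\<in>{1..m}. N x z i \<subseteq> cmp i (N x y i) (N y z i)))"

definition alg_closed ::
  "nat \<Rightarrow> (nat \<Rightarrow> 'a set \<Rightarrow> 'a set \<Rightarrow> 'a set) \<Rightarrow> (nat \<Rightarrow> nat \<Rightarrow> 'a set \<Rightarrow> 'a set)
     \<Rightarrow> 'v set \<Rightarrow> ('v \<Rightarrow> 'v \<Rightarrow> nat \<Rightarrow> 'a set) \<Rightarrow> bool" where
  "alg_closed m cmp Pr V N \<longleftrightarrow> comp_closed m cmp V N \<and>
     (\<forall>x\<in>V. \<forall>y\<in>V. x \<noteq> y \<longrightarrow> closed_proj m Pr (N x y))"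

text \<open>Inverse projection of Pr i j (a map from A_j to A_i): on atoms,
  b \<subseteq> inv b' iff b' \<subseteq> Pr i j b; extended to all relations by union.\<close>
definition inv_proj ::
  "(nat \<Rightarrow> 'a set) \<Rightarrow> (nat \<Rightarrow> nat \<Rightarrow> 'a set \<Rightarrow> 'a set) \<Rightarrow> nat \<Rightarrow> nat \<Rightarrow> 'a set \<Rightarrow> 'a set" where
  "inv_proj B Pr i j r = {b \<in> B i. \<exists>b'\<in>r. b' \<in> Pr i j {b}}"

definition walk :: "('n \<times> 'n) set \<Rightarrow> 'n list \<Rightarrow> bool" where
  "walk E ps \<longleftrightarrow> ps \<noteq> [] \<and> (\<forall>k. Suc k < length ps \<longrightarrow> (ps ! k, ps ! Suc k) \<in> E)"

definition anti_tree :: "'n set \<Rightarrow> ('n \<times> 'n) set \<Rightarrow> 'n \<Rightarrow> bool" where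
  "anti_tree V E r \<longleftrightarrow> E \<subseteq> V \<times> V \<and> r \<in> V \<and>
     (\<forall>v\<in>V. v \<noteq> r \<longrightarrow> (\<exists>!ps. walk E ps \<and> hd ps = v \<and> last ps = r))"

text \<open>An oriented chain i = k_0 -> ... -> k_s <- ... <- j, given as the upward walk ps
  from i to k_s and the upward walk qs from j to k_s.\<close>
definition oriented_chain :: "('n \<times> 'n) set \<Rightarrow> 'n \<Rightarrow> 'n \<Rightarrow> 'n list \<Rightarrow> 'n list \<Rightarrow> bool" where
  "oriented_chain E i j ps qs \<longleftrightarrow> walk E ps \<and> walk E qs \<and> hd ps = i \<and> hd qs = j \<and> last ps = last qs"

definition shortest_chain :: "('n \<times> 'n) set \<Rightarrow> 'n \<Rightarrow> 'n \<Rightarrow> 'n list \<Rightarrow> 'n list \<Rightarrow> bool" where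
  "shortest_chain E i j ps qs \<longleftrightarrow> oriented_chain E i j ps qs \<and>
     (\<forall>ps' qs'. oriented_chain E i j ps' qs' \<longrightarrow> length ps + length qs \<le> length ps' + length qs')"

fun up_map :: "(nat \<Rightarrow> nat \<Rightarrow> 'a set \<Rightarrow> 'a set) \<Rightarrow> nat list \<Rightarrow> 'a set \<Rightarrow> 'a set" where
  "up_map Pr (x # y # xs) r = up_map Pr (y # xs) (Pr x y r)"
| "up_map Pr _ r = r"

fun down_map :: "(nat \<Rightarrow> 'a set) \<Rightarrow> (nat \<Rightarrow> nat \<Rightarrow> 'a set \<Rightarrow> 'a set) \<Rightarrow> nat list \<Rightarrow> 'a set \<Rightarrow> 'a set" where
  "down_map B Pr (x # y # xs) r = inv_proj B Pr x y (down_map B Pr (y # xs) r)"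
| "down_map B Pr _ r = r"

definition plenary_anti_tree ::
  "nat \<Rightarrow> (nat \<Rightarrow> 'a set) \<Rightarrow> (nat \<Rightarrow> nat \<Rightarrow> 'a set \<Rightarrow> 'a set) \<Rightarrow> (nat \<times> nat) set \<Rightarrow> nat \<Rightarrow> bool" where
  "plenary_anti_tree m B Pr E r \<longleftrightarrow> anti_tree {1..m} E r \<and>
     (\<forall>i\<in>{1..m}. \<forall>j\<in>{1..m}. i \<noteq> j \<longrightarrow>
        (\<forall>ps qs. shortest_chain E i j ps qs \<longrightarrow>
           (\<forall>b\<in>B i. down_map B Pr qs (up_map Pr ps {b}) \<subseteq> Pr i j {b})))"

definition tree_multi_algebra ::
  "nat \<Rightarrow> (nat \<Rightarrow> 'a set) \<Rightarrow> (nat \<Rightarrow> 'a set \<Rightarrow> 'a set \<Rightarrow> 'a set) \<Rightarrow> (nat \<Rightarrow> 'a set \<Rightarrow> 'a set)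
     \<Rightarrow> (nat \<Rightarrow> 'a set) \<Rightarrow> (nat \<Rightarrow> nat \<Rightarrow> 'a set \<Rightarrow> 'a set) \<Rightarrow> bool" where
  "tree_multi_algebra m B cmp conv e Pr \<longleftrightarrow> multi_algebra m B cmp conv e Pr \<and>
     (\<exists>E r. plenary_anti_tree m B Pr E r)"

definition weakening ::
  "nat \<Rightarrow> (nat \<Rightarrow> 'a set) \<Rightarrow> (nat \<Rightarrow> 'a set \<Rightarrow> 'a set \<Rightarrow> 'a set) \<Rightarrow> (nat \<Rightarrow> 'a set \<Rightarrow> 'a set)
     \<Rightarrow> (nat \<Rightarrow> 'a set) \<Rightarrow> (nat \<Rightarrow> nat \<Rightarrow> 'a set \<Rightarrow> 'a set) \<Rightarrow> (nat \<Rightarrow> nat \<Rightarrow> 'a set \<Rightarrow> 'a set) \<Rightarrow> bool" where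
  "weakening m B cmp conv e Pr Pr' \<longleftrightarrow>
     multi_algebra m B cmp conv e Pr \<and> multi_algebra m B cmp conv e Pr' \<and>
     (\<forall>i\<in>{1..m}. \<forall>j\<in>{1..m}. i \<noteq> j \<longrightarrow> (\<forall>b\<in>B i. Pr i j {b} \<subseteq> Pr' i j {b}))"

definition tree_weakening ::
  "nat \<Rightarrow> (nat \<Rightarrow> 'a set) \<Rightarrow> (nat \<Rightarrow> 'a set \<Rightarrow> 'a set \<Rightarrow> 'a set) \<Rightarrow> (nat \<Rightarrow> 'a set \<Rightarrow> 'a set)
     \<Rightarrow> (nat \<Rightarrow> 'a set) \<Rightarrow> (nat \<Rightarrow> nat \<Rightarrow> 'a set \<Rightarrow> 'a set) \<Rightarrow> (nat \<Rightarrow> nat \<Rightarrow> 'a set \<Rightarrow> 'a set) \<Rightarrow> bool" where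
  "tree_weakening m B cmp conv e Pr Pr' \<longleftrightarrow> weakening m B cmp conv e Pr Pr' \<and>
     (\<exists>E r. plenary_anti_tree m B Pr E r \<and>
        (\<forall>(i, j)\<in>E. i \<noteq> j \<longrightarrow> (\<forall>b\<in>B i. Pr i j {b} = Pr' i j {b})))"

end

theory Submission
  imports Defs
begin

text \<open>Let \<open>R = ({b\<^sub>1}, \<dots>, {b\<^sub>m})\<close> be basic and closed under projection for \<open>\<A>'\<close>. On the edges
  \<open>x \<rightarrow> y\<close> of the plenary anti-tree the projections of \<open>\<A>\<close> and \<open>\<A>'\<close> agree on atoms, so
  \<open>b\<^sub>y \<in> \<Rsh>\<^sub>x\<^sup>y b\<^sub>x\<close>. Following the shortest oriented chain from \<open>i\<close> to \<open>j\<close>, the upward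
  projections therefore carry \<open>b\<^sub>i\<close> to a relation containing \<open>b\<^sub>k\<close> at the top vertex \<open>k\<close>, and
  the downward inverse projections carry that to a relation containing \<open>b\<^sub>j\<close>; by plenarity
  this relation lies inside \<open>\<Rsh>\<^sub>i\<^sup>j b\<^sub>i\<close>. Part (2) is part (1) applied to every edge of the
  scenario.\<close>

lemma walk_singleton: "walk E [x]"
  unfolding walk_def by simp

lemma walk_Cons_Cons: "walk E (x # y # xs) \<longleftrightarrow> (x, y) \<in> E \<and> walk E (y # xs)"
  unfolding walk_def by (auto simp: less_Suc_eq_0_disj)

lemma walk_snoc: "walk E ps \<Longrightarrow> (last ps, v) \<in> E \<Longrightarrow> walk E (ps @ [v])"
  by (induction ps rule: induct_list012)
    (simp_all add: walk_Cons_Cons walk_singleton walk_def[of _ "[]"])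

lemma anti_tree_walk_to_root:
  assumes "anti_tree V E r" and "v \<in> V"
  obtains ps where "walk E ps" "hd ps = v" "last ps = r"
proof (cases "v = r")
  case True
  then show ?thesis using walk_singleton that by fastforce
next
  case False
  then show ?thesis using assms that unfolding anti_tree_def by blast
qed

text \<open>A loop at a vertex \<open>v \<noteq> r\<close> could be prepended to the path from \<open>v\<close> to the root, and a
  loop at the root appended to the path from any other vertex; either way uniqueness of
  paths to the root fails. With \<open>V = {r}\<close> a loop at the root is allowed.\<close>

lemma anti_tree_irrefl:
  assumes tree: "anti_tree V E r" and nontrivial: "V \<noteq> {r}"
  shows "(v, v) \<notin> E"
proof
  assume loop: "(v, v) \<in> E"
  have unique: "\<exists>!ps. walk E ps \<and> hd ps = w \<and> last ps = r" if "w \<in> V" "w \<noteq> r" for w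
    using tree that unfolding anti_tree_def by blast
  have "r \<in> V" "v \<in> V" using tree loop unfolding anti_tree_def by auto
  show False
  proof (cases "v = r")
    case False
    obtain ps where ps: "walk E ps" "hd ps = v" "last ps = r"
      using anti_tree_walk_to_root[OF tree \<open>v \<in> V\<close>] .
    then have "ps \<noteq> []" by (simp add: walk_def)
    then have "walk E (v # ps)" "hd (v # ps) = v" "last (v # ps) = r"
      using ps loop by (auto simp: walk_Cons_Cons neq_Nil_conv)
    then have "v # ps = ps" using unique[OF \<open>v \<in> V\<close> False] ps by blast
    then show False by simp
  next
    case True
    obtain w where w: "w \<in> V" "w \<noteq> r" using nontrivial \<open>r \<in> V\<close> by blast
    obtain ps where ps: "walk E ps" "hd ps = w" "last ps = r"
      using anti_tree_walk_to_root[OF tree \<open>w \<in> V\<close>] .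
    then have "ps \<noteq> []" by (simp add: walk_def)
    then have "walk E (ps @ [r])" "hd (ps @ [r]) = w" "last (ps @ [r]) = r"
      using ps loop True by (auto intro: walk_snoc)
    then have "ps @ [r] = ps" using unique[OF w] ps by blast
    then show False by simp
  qed
qed

lemma shortest_chain_exists:
  assumes "oriented_chain E i j ps qs"
  obtains ps' qs' where "shortest_chain E i j ps' qs'"
proof -
  let ?chain = "\<lambda>c. oriented_chain E i j (fst c) (snd c)"
  let ?len = "\<lambda>c. length (fst c) + length (snd c)"
  have "?chain (ps, qs)" using assms by simp
  then obtain c where c: "?chain c" and least: "\<And>c'. ?chain c' \<Longrightarrow> ?len c \<le> ?len c'"
    using ex_has_least_nat[where P = ?chain and m = ?len] by blast
  have "shortest_chain E i j (fst c) (snd c)"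
    unfolding shortest_chain_def
  proof (intro conjI c allI impI)
    fix ps' qs' assume "oriented_chain E i j ps' qs'"
    then show "?len c \<le> length ps' + length qs'" using least[of "(ps', qs')"] by simp
  qed
  then show ?thesis using that by blast
qed

lemma anti_tree_shortest_chain_exists:
  assumes "anti_tree V E r" and "i \<in> V" and "j \<in> V"
  obtains ps qs where "shortest_chain E i j ps qs"
proof -
  obtain ps where "walk E ps" "hd ps = i" "last ps = r"
    using anti_tree_walk_to_root[OF assms(1,2)] .
  moreover obtain qs where "walk E qs" "hd qs = j" "last qs = r"
    using anti_tree_walk_to_root[OF assms(1,3)] .
  ultimately have "oriented_chain E i j ps qs" unfolding oriented_chain_def by simp
  then show ?thesis using that by (rule shortest_chain_exists)
qed

lemma projection_op_mono:
  assumes "projection_op B conv B' conv' P" and "r \<subseteq> r'" and "r' \<subseteq> B"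
  shows "P r \<subseteq> P r'"
proof -
  have "P r' = P (r \<union> r')" using \<open>r \<subseteq> r'\<close> by (simp add: sup.absorb2)
  also have "\<dots> = P r \<union> P r'"
    using assms unfolding projection_op_def by (meson order_trans)
  finally show ?thesis by blast
qed

lemma up_map_mem:
  assumes "walk E ps"
    and proj: "\<And>x y. (x, y) \<in> E \<Longrightarrow> projection_op (B x) (conv x) (B y) (conv y) (Pr x y)"
    and edge: "\<And>x y. (x, y) \<in> E \<Longrightarrow> b y \<in> Pr x y {b x}"
    and "b (hd ps) \<in> s" and "s \<subseteq> B (hd ps)"
  shows "b (last ps) \<in> up_map Pr ps s \<and> up_map Pr ps s \<subseteq> B (last ps)"
  using assms(1,4,5)
proof (induction ps arbitrary: s rule: induct_list012)
  case (3 x y xs)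
  then have xy: "(x, y) \<in> E" and "walk E (y # xs)" by (simp_all add: walk_Cons_Cons)
  have "b y \<in> Pr x y s"
    using projection_op_mono[OF proj[OF xy], of "{b x}" s] edge[OF xy] 3 by auto
  moreover have "Pr x y s \<subseteq> B y"
    using proj[OF xy] 3 unfolding projection_op_def by simp
  ultimately show ?case using 3 \<open>walk E (y # xs)\<close> by simp
qed (auto simp: walk_def)

lemma down_map_mem:
  assumes "walk E qs"
    and atom: "\<And>x y. (x, y) \<in> E \<Longrightarrow> b x \<in> B x"
    and edge: "\<And>x y. (x, y) \<in> E \<Longrightarrow> b y \<in> Pr x y {b x}"
    and "b (last qs) \<in> s"
  shows "b (hd qs) \<in> down_map B Pr qs s"
  using assms(1,4)
proof (induction qs rule: induct_list012)
  case (3 x y xs)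
  then have "(x, y) \<in> E" and "b y \<in> down_map B Pr (y # xs) s" by (simp_all add: walk_Cons_Cons)
  then show ?case using atom[of x y] edge[of x y] by (auto simp: inv_proj_def)
qed (auto simp: walk_def)

lemma plenary_anti_tree_closed_proj:
  assumes ma: "multi_algebra m B cmp conv e Pr"
    and plenary: "plenary_anti_tree m B Pr E r"
    and basic: "basic_rel m B R"
    and closed_edges: "\<forall>(x, y)\<in>E. x \<noteq> y \<longrightarrow> R y \<subseteq> Pr x y (R x)"
  shows "closed_proj m Pr R"
  unfolding closed_proj_def
proof (intro ballI impI)
  fix i j assume ij: "i \<in> {1..m}" "j \<in> {1..m}" "i \<noteq> j"
  obtain b where b: "\<And>k. k \<in> {1..m} \<Longrightarrow> b k \<in> B k \<and> R k = {b k}"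
    using basic unfolding basic_rel_def by metis
  have tree: "anti_tree {1..m} E r" using plenary unfolding plenary_anti_tree_def by blast
  then have E: "E \<subseteq> {1..m} \<times> {1..m}" unfolding anti_tree_def by blast
  have "{1..m} \<noteq> {r}" using ij by auto
  then have irrefl: "x \<noteq> y" if "(x, y) \<in> E" for x y
    using anti_tree_irrefl[OF tree] that by blast
  have proj: "projection_op (B x) (conv x) (B y) (conv y) (Pr x y)" if "(x, y) \<in> E" for x y
    using ma E irrefl[OF that] that unfolding multi_algebra_def by blast
  have atom: "b x \<in> B x" if "(x, y) \<in> E" for x y
    using b E that by blast
  have edge: "b y \<in> Pr x y {b x}" if "(x, y) \<in> E" for x y
    using closed_edges b E irrefl[OF that] that by fastforce
  obtain ps qs where chain: "shortest_chain E i j ps qs"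
    using anti_tree_shortest_chain_exists[OF tree] ij by metis
  then have up: "walk E ps" "hd ps = i" and down: "walk E qs" "hd qs = j" "last ps = last qs"
    unfolding shortest_chain_def oriented_chain_def by auto
  have "b (last ps) \<in> up_map Pr ps {b i}"
    using up_map_mem[where B = B and conv = conv and Pr = Pr and b = b and s = "{b i}",
        OF up(1) proj edge] up b ij by auto
  then have "b j \<in> down_map B Pr qs (up_map Pr ps {b i})"
    using down_map_mem[where B = B and Pr = Pr and b = b and s = "up_map Pr ps {b i}",
        OF down(1) atom edge] down by auto
  also have "\<dots> \<subseteq> Pr i j {b i}"
    using plenary chain ij b unfolding plenary_anti_tree_def by blast
  finally show "R j \<subseteq> Pr i j (R i)" using b ij by auto
qed

theorem lemma6p29:
  fixes m :: nat
    and B :: "nat \<Rightarrow> 'a set"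
    and cmp :: "nat \<Rightarrow> 'a set \<Rightarrow> 'a set \<Rightarrow> 'a set"
    and conv :: "nat \<Rightarrow> 'a set \<Rightarrow> 'a set"
    and e :: "nat \<Rightarrow> 'a set"
    and Pr Pr' :: "nat \<Rightarrow> nat \<Rightarrow> 'a set \<Rightarrow> 'a set"
  assumes "tree_multi_algebra m B cmp conv e Pr"
    and "tree_weakening m B cmp conv e Pr Pr'"
  shows "(\<forall>R. basic_rel m B R \<longrightarrow> closed_proj m Pr' R \<longrightarrow> closed_proj m Pr R)
       \<and> (\<forall>(V :: 'v set) N. scenario m B conv V N \<longrightarrow> alg_closed m cmp Pr' V N
              \<longrightarrow> alg_closed m cmp Pr V N)"
proof -
  have ma: "multi_algebra m B cmp conv e Pr"
    using assms(1) unfolding tree_multi_algebra_def by blast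
  obtain E r where plenary: "plenary_anti_tree m B Pr E r"
    and agree: "\<forall>(i, j)\<in>E. i \<noteq> j \<longrightarrow> (\<forall>b\<in>B i. Pr i j {b} = Pr' i j {b})"
    using assms(2) unfolding tree_weakening_def by blast
  have E: "E \<subseteq> {1..m} \<times> {1..m}"
    using plenary unfolding plenary_anti_tree_def anti_tree_def by blast
  have part1: "closed_proj m Pr R"
    if basic: "basic_rel m B R" and closed: "closed_proj m Pr' R" for R
  proof (rule plenary_anti_tree_closed_proj[OF ma plenary basic])
    have "R y \<subseteq> Pr x y (R x)" if xy: "(x, y) \<in> E" "x \<noteq> y" for x y
    proof -
      have "x \<in> {1..m}" "y \<in> {1..m}" using xy E by auto
      then obtain a where "a \<in> B x" "R x = {a}" using basic unfolding basic_rel_def by blast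
      have "R y \<subseteq> Pr' x y (R x)"
        using closed \<open>x \<in> {1..m}\<close> \<open>y \<in> {1..m}\<close> xy(2) unfolding closed_proj_def by blast
      also have "\<dots> = Pr x y (R x)"
        using agree xy \<open>a \<in> B x\<close> \<open>R x = {a}\<close> by auto
      finally show ?thesis .
    qed
    then show "\<forall>(x, y)\<in>E. x \<noteq> y \<longrightarrow> R y \<subseteq> Pr x y (R x)" by blast
  qed
  moreover have "alg_closed m cmp Pr V N"
    if "scenario m B conv V N" and "alg_closed m cmp Pr' V N" for V :: "'v set" and N
    using that part1 unfolding scenario_def alg_closed_def by blast
  ultimately show ?thesis by blast
qed

end
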